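(* Let $V_{\mathrm{total}}\ge0$, $B_{\mathrm{total}}>0$, $R^S_{\mathrm{total}}>0$, $F_{\mathrm{total}}>0$. Problem (P2): minimize $\max_uT_u^{\eta\text{-opt}}(B_u,R_u^S,F_u)$ over $B_u>0$, $R_u^S>0$, $F_u>0$ ($u=1,\dots,U$) subject to $\sum_uV_u^{\eta\text{-opt}}(B_u,R_u^S,F_u)\le V_{\mathrm{total}}$, $\sum_uB_u\le B_{\mathrm{total}}$, $\sum_uR_u^S\le R^S_{\mathrm{total}}$, $\sum_uF_u\le F_{\mathrm{total}}$. Problem (P3): minimize $\max_u\frac{D_u}{B_ur_u}$ over $B_u\ge0$, $R_u^S\ge0$, $F_u\ge0$ subject to $\sum_uB_u\le B_{\mathrm{total}}$, $\sum_uR_u^S\le R^S_{\mathrm{total}}$, $\sum_uF_u\le F_{\mathrm{total}}$, $R_u^S\le B_ur_u\le\frac{R_u^S}{\zeta_u}$ for all $u$, and $\frac{F_u}{\rho_u}=\frac{B_ur_u-R_u^S}{1-\zeta_u}$ for all $u$ (with the convention $D_u/0=+\infty$). Then the optimal values (infima) of (P2) and (P3) are equal.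
   Context: There are users $u=1,\dots,U$, each with constants $D_u>0$, $r_u>0$, $\rho_u>0$, $\zeta_u\in(0,1)$. The functions $T_u^{\eta\text{-opt}}(B_u,R_u^S,F_u)$ and $V_u^{\eta\text{-opt}}(B_u,R_u^S,F_u)$ (for $B_u,R_u^S,F_u>0$) are defined by six exhaustive cases (with $c_u=B_ur_u$): 1. $c_u<R_u^S$: $T^{\eta\text{-opt}}_u=\frac{D_u}{c_u}$, $V^{\eta\text{-opt}}_u=0$. 2. $R_u^S\le c_u<\frac{R_u^S}{\zeta_u}$, $\frac{F_u}{\rho_u}<\frac{c_u-R_u^S}{1-\zeta_u}$: $T^{\eta\text{-opt}}_u=\frac{D_u\rho_u}{F_u(1-\zeta_u)+\rho_uR_u^S}$, $V^{\eta\text{-opt}}_u=\frac{D_u}{c_u}[c_u-R_u^S-(1-\zeta_u)\frac{F_u}{\rho_u}]$. 3. $R_u^S\le c_u<\frac{R_u^S}{\zeta_u}$, $\frac{F_u}{\rho_u}\ge\frac{c_u-R_u^S}{1-\zeta_u}$: $T^{\eta\text{-opt}}_u=\frac{D_u}{c_u}$, $V^{\eta\text{-opt}}_u=0$. 4. $c_u\ge\frac{R_u^S}{\zeta_u}$, $\frac{F_u}{\rho_u}<\frac{R_u^S}{\zeta_u}$: $T^{\eta\text{-opt}}_u=\frac{D_u\rho_u}{F_u(1-\zeta_u)+\rho_uR_u^S}$, $V^{\eta\text{-opt}}_u=\frac{D_u}{c_u}[c_u-R_u^S-(1-\zeta_u)\frac{F_u}{\rho_u}]$. 5. $c_u\ge\frac{R_u^S}{\zeta_u}$,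 $\frac{R_u^S}{\zeta_u}\le\frac{F_u}{\rho_u}<c_u$: $T^{\eta\text{-opt}}_u=\frac{\zeta_uD_u}{R_u^S}$, $V^{\eta\text{-opt}}_u=\frac{D_u}{c_u}[c_u-R_u^S-(1-\zeta_u)\frac{F_u}{\rho_u}]$. 6. $c_u\ge\frac{R_u^S}{\zeta_u}$, $\frac{F_u}{\rho_u}\ge c_u$: $T^{\eta\text{-opt}}_u=\frac{\zeta_uD_u}{R_u^S}$, $V^{\eta\text{-opt}}_u=\frac{D_u}{c_u}(\zeta_uc_u-R_u^S)$. *)

theory Defs
  imports Complex_Main "HOL-Library.Extended_Real"
begin

definition T_opt :: "real \<Rightarrow> real \<Rightarrow> real \<Rightarrow> real \<Rightarrow> real \<Rightarrow> real \<Rightarrow> real \<Rightarrow> real" where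
  "T_opt D r \<rho> \<zeta> B RS F =
    (let c = B * r in
     if c < RS then D / c
     else if c < RS / \<zeta> then
       (if F / \<rho> < (c - RS) / (1 - \<zeta>) then D * \<rho> / (F * (1 - \<zeta>) + \<rho> * RS)
        else D / c)
     else
       (if F / \<rho> < RS / \<zeta> then D * \<rho> / (F * (1 - \<zeta>) + \<rho> * RS)
        else if F / \<rho> < c then \<zeta> * D / RS
        else \<zeta> * D / RS))"

definition V_opt :: "real \<Rightarrow> real \<Rightarrow> real \<Rightarrow> real \<Rightarrow> real \<Rightarrow> real \<Rightarrow> real \<Rightarrow> real" where
  "V_opt D r \<rho> \<zeta> B RS F =
    (let c = B * r in
     if c < RS then 0
     else if c < RS / \<zeta> then
       (if F / \<rho> < (c - RS) / (1 - \<zeta>) then D / c * (c - RS - (1 - \<zeta>) * (F / \<rho>))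
        else 0)
     else
       (if F / \<rho> < RS / \<zeta> then D / c * (c - RS - (1 - \<zeta>) * (F / \<rho>))
        else if F / \<rho> < c then D / c * (c - RS - (1 - \<zeta>) * (F / \<rho>))
        else D / c * (\<zeta> * c - RS)))"

definition P2_value ::
  "nat \<Rightarrow> (nat \<Rightarrow> real) \<Rightarrow> (nat \<Rightarrow> real) \<Rightarrow> (nat \<Rightarrow> real) \<Rightarrow> (nat \<Rightarrow> real)
   \<Rightarrow> real \<Rightarrow> real \<Rightarrow> real \<Rightarrow> real \<Rightarrow> ereal" where
  "P2_value U D r \<rho> \<zeta> Vtot Btot Rtot Ftot =
    Inf { Max ((\<lambda>u. ereal (T_opt (D u) (r u) (\<rho> u) (\<zeta> u) (B u) (RS u) (F u))) ` {1..U})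
        | B RS F.
          (\<forall>u\<in>{1..U}. B u > 0 \<and> RS u > 0 \<and> F u > 0)
          \<and> (\<Sum>u\<in>{1..U}. V_opt (D u) (r u) (\<rho> u) (\<zeta> u) (B u) (RS u) (F u)) \<le> Vtot
          \<and> (\<Sum>u\<in>{1..U}. B u) \<le> Btot
          \<and> (\<Sum>u\<in>{1..U}. RS u) \<le> Rtot
          \<and> (\<Sum>u\<in>{1..U}. F u) \<le> Ftot }"

definition ratio_inf :: "real \<Rightarrow> real \<Rightarrow> ereal" where
  "ratio_inf D c = (if c = 0 then \<infinity> else ereal (D / c))"

definition P3_value ::
  "nat \<Rightarrow> (nat \<Rightarrow> real) \<Rightarrow> (nat \<Rightarrow> real) \<Rightarrow> (nat \<Rightarrow> real) \<Rightarrow> (nat \<Rightarrow> real)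
   \<Rightarrow> real \<Rightarrow> real \<Rightarrow> real \<Rightarrow> ereal" where
  "P3_value U D r \<rho> \<zeta> Btot Rtot Ftot =
    Inf { Max ((\<lambda>u. ratio_inf (D u) (B u * r u)) ` {1..U})
        | B RS F.
          (\<forall>u\<in>{1..U}. B u \<ge> 0 \<and> RS u \<ge> 0 \<and> F u \<ge> 0)
          \<and> (\<Sum>u\<in>{1..U}. B u) \<le> Btot
          \<and> (\<Sum>u\<in>{1..U}. RS u) \<le> Rtot
          \<and> (\<Sum>u\<in>{1..U}. F u) \<le> Ftot
          \<and> (\<forall>u\<in>{1..U}. RS u \<le> B u * r u \<and> B u * r u \<le> RS u / \<zeta> u)
          \<and> (\<forall>u\<in>{1..U}. F u / \<rho> u = (B u * r u - RS u) / (1 - \<zeta> u)) }"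

end

theory Submission
  imports Defs
begin

text \<open>In every case T_opt is D divided by the effective rate
  min (B r) (R / \<zeta>) (R + (1 - \<zeta>) F / \<rho>), the bottleneck among transmission, local
  processing and offloaded computing. Any (P2)-feasible allocation can therefore be cut down
  to a (P3)-feasible one in which B r equals this rate, with the same latency. Conversely a (P3)-feasible allocation
  with finite value, scaled by t < 1 with the freed computing budget spread evenly, is
  (P2)-feasible with vanishing V and latencies D / (t B r); letting t tend to 1 closes the gap.\<close>

definition effective_rate :: "real \<Rightarrow> real \<Rightarrow> real \<Rightarrow> real \<Rightarrow> real \<Rightarrow> real \<Rightarrow> real" where
  "effective_rate r \<rho> \<zeta> B R F = min (B * r) (min (R / \<zeta>) (R + (1 - \<zeta>) * (F / \<rho>)))"

lemma effective_rate_pos: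
  assumes "r > 0" "\<rho> > 0" "0 < \<zeta>" "\<zeta> < 1" "B > 0" "R > 0" "F > 0"
  shows "effective_rate r \<rho> \<zeta> B R F > 0"
proof -
  have "(1 - \<zeta>) * (F / \<rho>) > 0" using assms by simp
  then show ?thesis using assms by (simp add: effective_rate_def add_pos_pos)
qed

lemma T_opt_eq_div_effective_rate:
  assumes "r > 0" "\<rho> > 0" "0 < \<zeta>" "\<zeta> < 1" "R > 0" "F > 0"
  shows "T_opt D r \<rho> \<zeta> B R F = D / effective_rate r \<rho> \<zeta> B R F"
proof -
  have R_lt: "R < R / \<zeta>" using assms by (simp add: field_simps)
  have cmp_rate: "F / \<rho> < (B * r - R) / (1 - \<zeta>) \<longleftrightarrow> R + (1 - \<zeta>) * (F / \<rho>) < B * r"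
    using assms by (simp add: field_simps)
  have R_div: "R / \<zeta> = R + (1 - \<zeta>) * (R / \<zeta>)" using assms by (simp add: field_simps)
  have cmp_local: "F / \<rho> < R / \<zeta> \<longleftrightarrow> R + (1 - \<zeta>) * (F / \<rho>) < R / \<zeta>"
    by (subst (2) R_div) (use assms in \<open>simp del: times_divide_eq_right\<close>)
  have offload: "D * \<rho> / (F * (1 - \<zeta>) + \<rho> * R) = D / (R + (1 - \<zeta>) * (F / \<rho>))"
    using assms by (simp add: field_simps)
  have local: "\<zeta> * D / R = D / (R / \<zeta>)" by simp
  have "0 \<le> (1 - \<zeta>) * (F / \<rho>)" using assms by simp
  then show ?thesis unfolding T_opt_def effective_rate_def Let_def offload local
    using R_lt cmp_rate cmp_local by (auto simp: min_def)
qed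

lemma effective_rate_eq_rate:
  assumes "\<rho> > 0" "\<zeta> < 1" "R \<le> B * r" "B * r \<le> R / \<zeta>" "(B * r - R) / (1 - \<zeta>) \<le> F / \<rho>"
  shows "effective_rate r \<rho> \<zeta> B R F = B * r"
proof -
  have "B * r - R \<le> (1 - \<zeta>) * (F / \<rho>)" using assms by (simp add: field_simps)
  then show ?thesis using assms by (simp add: effective_rate_def)
qed

lemma V_opt_eq_0:
  assumes "0 < \<zeta>" "\<zeta> < 1" "R \<le> B * r" "B * r \<le> R / \<zeta>" "(B * r - R) / (1 - \<zeta>) \<le> F / \<rho>"
  shows "V_opt D r \<rho> \<zeta> B R F = 0"
proof (cases "B * r < R / \<zeta>")
  case True
  then show ?thesis using assms by (auto simp: V_opt_def Let_def)
next
  case False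
  then have rate: "B * r = R / \<zeta>" using assms by auto
  have "(B * r - R) / (1 - \<zeta>) = R / \<zeta>" unfolding rate using assms by (simp add: field_simps)
  then show ?thesis using assms rate by (auto simp: V_opt_def Let_def)
qed

text \<open>The witness keeps the effective rate e and splits it as R' = min R e locally and
  e - R' offloaded.\<close>
lemma exists_coupled_allocation:
  assumes "r > 0" "\<rho> > 0" "0 < \<zeta>" "\<zeta> < 1" "B > 0" "R > 0" "F > 0"
  shows "\<exists>B' R' F'. 0 \<le> B' \<and> 0 \<le> R' \<and> 0 \<le> F' \<and> B' \<le> B \<and> R' \<le> R \<and> F' \<le> F
    \<and> R' \<le> B' * r \<and> B' * r \<le> R' / \<zeta> \<and> F' / \<rho> = (B' * r - R') / (1 - \<zeta>)
    \<and> B' * r = effective_rate r \<rho> \<zeta> B R F"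
proof -
  define e where "e = effective_rate r \<rho> \<zeta> B R F"
  define R' where "R' = min R e"
  have e_pos: "e > 0" unfolding e_def using effective_rate_pos[OF assms] .
  have e_le: "e \<le> B * r" "e \<le> R / \<zeta>" "e \<le> R + (1 - \<zeta>) * (F / \<rho>)"
    unfolding e_def effective_rate_def by auto
  have "e \<le> R' / \<zeta>"
  proof (cases "e \<le> R")
    case True
    have "e \<le> e / \<zeta>" using e_pos assms by (simp add: field_simps)
    then show ?thesis using True by (simp add: R'_def)
  qed (use e_le in \<open>simp add: R'_def\<close>)
  moreover have "\<rho> * (e - R') / (1 - \<zeta>) \<le> F"
  proof -
    have "0 \<le> (1 - \<zeta>) * (F / \<rho>)" using assms by simp
    then have "e - R' \<le> (1 - \<zeta>) * (F / \<rho>)"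
      using e_le(3) by (auto simp: R'_def min_def)
    then show ?thesis using assms by (simp add: field_simps)
  qed
  moreover have "e / r \<le> B" using e_le(1) assms by (simp add: field_simps)
  ultimately show ?thesis
    using assms e_pos
    by (intro exI[of _ "e / r"] exI[of _ R'] exI[of _ "\<rho> * (e - R') / (1 - \<zeta>)"])
       (auto simp: R'_def e_def)
qed

lemma scaled_coupled_allocation:
  assumes "r > 0" "\<rho> > 0" "0 < \<zeta>" "\<zeta> < 1" "B > 0" "F \<ge> 0" "t > 0" "s > 0"
    and "R \<le> B * r" "B * r \<le> R / \<zeta>" "F / \<rho> = (B * r - R) / (1 - \<zeta>)"
  shows "t * B > 0 \<and> t * R > 0 \<and> t * F + s > 0
    \<and> V_opt D r \<rho> \<zeta> (t * B) (t * R) (t * F + s) = 0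
    \<and> T_opt D r \<rho> \<zeta> (t * B) (t * R) (t * F + s) = D / (B * r) / t"
proof -
  have "B * r * \<zeta> \<le> R" using assms by (simp add: field_simps)
  moreover have "B * r * \<zeta> > 0" using assms by simp
  ultimately have R_pos: "R > 0" by linarith
  have coupled: "t * R \<le> t * B * r" "t * B * r \<le> t * R / \<zeta>"
    using mult_left_mono[OF assms(9), of t] mult_left_mono[OF assms(10), of t] assms(7)
    by simp_all
  have "(t * B * r - t * R) / (1 - \<zeta>) = t * (F / \<rho>)"
    using assms(11) by (simp add: field_simps)
  also have "\<dots> \<le> (t * F + s) / \<rho>" using assms by (simp add: field_simps)
  finally have offload: "(t * B * r - t * R) / (1 - \<zeta>) \<le> (t * F + s) / \<rho>" .
  have "t * F + s > 0" using assms by (simp add: add_nonneg_pos)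
  with coupled offload assms R_pos show ?thesis
    using T_opt_eq_div_effective_rate[of r \<rho> \<zeta> "t * R" "t * F + s" D "t * B"]
      effective_rate_eq_rate[of \<rho> \<zeta> "t * R" "t * B" r "t * F + s"]
      V_opt_eq_0[of \<zeta> "t * R" "t * B" r "t * F + s" \<rho> D]
    by (simp add: mult.assoc)
qed

lemma P3_value_le_P2_value:
  assumes "\<forall>u\<in>{1..U}. r u > 0 \<and> \<rho> u > 0 \<and> 0 < \<zeta> u \<and> \<zeta> u < 1"
  shows "P3_value U D r \<rho> \<zeta> Btot Rtot Ftot \<le> P2_value U D r \<rho> \<zeta> Vtot Btot Rtot Ftot"
  unfolding P2_value_def
proof (rule Inf_greatest, clarify)
  fix B RS F
  assume pos: "\<forall>u\<in>{1..U}. B u > 0 \<and> RS u > 0 \<and> F u > 0"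
    and B_tot: "(\<Sum>u\<in>{1..U}. B u) \<le> Btot" and R_tot: "(\<Sum>u\<in>{1..U}. RS u) \<le> Rtot"
    and F_tot: "(\<Sum>u\<in>{1..U}. F u) \<le> Ftot"
  have "\<forall>u\<in>{1..U}. \<exists>b c f. 0 \<le> b \<and> 0 \<le> c \<and> 0 \<le> f \<and> b \<le> B u \<and> c \<le> RS u \<and> f \<le> F u
      \<and> c \<le> b * r u \<and> b * r u \<le> c / \<zeta> u \<and> f / \<rho> u = (b * r u - c) / (1 - \<zeta> u)
      \<and> b * r u = effective_rate (r u) (\<rho> u) (\<zeta> u) (B u) (RS u) (F u)"
    using assms pos by (intro ballI exists_coupled_allocation) auto
  then obtain B' R' F' where alloc: "\<forall>u\<in>{1..U}. 0 \<le> B' u \<and> 0 \<le> R' u \<and> 0 \<le> F' u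
      \<and> B' u \<le> B u \<and> R' u \<le> RS u \<and> F' u \<le> F u
      \<and> R' u \<le> B' u * r u \<and> B' u * r u \<le> R' u / \<zeta> u
      \<and> F' u / \<rho> u = (B' u * r u - R' u) / (1 - \<zeta> u)
      \<and> B' u * r u = effective_rate (r u) (\<rho> u) (\<zeta> u) (B u) (RS u) (F u)"
    by metis
  have same_latency: "ratio_inf (D u) (B' u * r u) = ereal (T_opt (D u) (r u) (\<rho> u) (\<zeta> u) (B u) (RS u) (F u))"
    if u: "u \<in> {1..U}" for u
    using alloc assms pos effective_rate_pos[of "r u" "\<rho> u" "\<zeta> u" "B u" "RS u" "F u"]
      T_opt_eq_div_effective_rate[of "r u" "\<rho> u" "\<zeta> u" "RS u" "F u" "D u" "B u"] u
    by (auto simp: ratio_inf_def)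
  have "(\<Sum>u\<in>{1..U}. B' u) \<le> Btot" "(\<Sum>u\<in>{1..U}. R' u) \<le> Rtot" "(\<Sum>u\<in>{1..U}. F' u) \<le> Ftot"
    using sum_mono[of "{1..U}" B' B] sum_mono[of "{1..U}" R' RS] sum_mono[of "{1..U}" F' F]
      alloc B_tot R_tot F_tot by fastforce+
  then have "P3_value U D r \<rho> \<zeta> Btot Rtot Ftot \<le> Max ((\<lambda>u. ratio_inf (D u) (B' u * r u)) ` {1..U})"
    unfolding P3_value_def using alloc by (intro Inf_lower) blast
  then show "P3_value U D r \<rho> \<zeta> Btot Rtot Ftot
      \<le> Max ((\<lambda>u. ereal (T_opt (D u) (r u) (\<rho> u) (\<zeta> u) (B u) (RS u) (F u))) ` {1..U})"
    by (simp only: image_cong[OF refl same_latency])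
qed

text \<open>The freed computing budget (1 - t) Ftot is spread evenly so that every F stays positive.\<close>
lemma P2_value_le_scaled_P3_value:
  assumes "U \<ge> 1" "\<forall>u\<in>{1..U}. r u > 0 \<and> \<rho> u > 0 \<and> 0 < \<zeta> u \<and> \<zeta> u < 1"
    and "Vtot \<ge> 0" "Btot \<ge> 0" "Rtot \<ge> 0" "Ftot > 0" "0 < t" "t < 1"
    and "\<forall>u\<in>{1..U}. B u > 0 \<and> F u \<ge> 0"
    and B_tot: "(\<Sum>u\<in>{1..U}. B u) \<le> Btot" and R_tot: "(\<Sum>u\<in>{1..U}. RS u) \<le> Rtot"
    and F_tot: "(\<Sum>u\<in>{1..U}. F u) \<le> Ftot"
    and "\<forall>u\<in>{1..U}. RS u \<le> B u * r u \<and> B u * r u \<le> RS u / \<zeta> u"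
    and "\<forall>u\<in>{1..U}. F u / \<rho> u = (B u * r u - RS u) / (1 - \<zeta> u)"
    and bound: "\<forall>u\<in>{1..U}. D u / (B u * r u) \<le> z"
  shows "P2_value U D r \<rho> \<zeta> Vtot Btot Rtot Ftot \<le> ereal (z / t)"
proof -
  define s where "s = (1 - t) * Ftot / real U"
  have "s > 0" using assms by (simp add: s_def)
  then have scaled: "t * B u > 0 \<and> t * RS u > 0 \<and> t * F u + s > 0
      \<and> V_opt (D u) (r u) (\<rho> u) (\<zeta> u) (t * B u) (t * RS u) (t * F u + s) = 0
      \<and> T_opt (D u) (r u) (\<rho> u) (\<zeta> u) (t * B u) (t * RS u) (t * F u + s) = D u / (B u * r u) / t"
    if "u \<in> {1..U}" for u
    using that assms by (intro scaled_coupled_allocation) auto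
  have "t * Btot \<le> Btot" "t * Rtot \<le> Rtot" using assms by (simp_all add: mult_left_le_one_le)
  then have "(\<Sum>u\<in>{1..U}. t * B u) \<le> Btot" "(\<Sum>u\<in>{1..U}. t * RS u) \<le> Rtot"
    using B_tot R_tot assms(7)
    by (simp_all add: sum_distrib_left[symmetric]) (meson less_imp_le mult_left_mono order_trans)+
  moreover have "(\<Sum>u\<in>{1..U}. t * F u + s) \<le> Ftot"
  proof -
    have "(\<Sum>u\<in>{1..U}. t * F u + s) = t * (\<Sum>u\<in>{1..U}. F u) + (1 - t) * Ftot"
      using assms(1) by (simp add: s_def sum.distrib sum_distrib_left)
    also have "\<dots> \<le> t * Ftot + (1 - t) * Ftot" using F_tot assms by simp
    finally show ?thesis by (simp add: algebra_simps)
  qed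
  moreover have "(\<Sum>u\<in>{1..U}. V_opt (D u) (r u) (\<rho> u) (\<zeta> u) (t * B u) (t * RS u) (t * F u + s)) \<le> Vtot"
    using scaled assms by simp
  ultimately have "P2_value U D r \<rho> \<zeta> Vtot Btot Rtot Ftot
      \<le> Max ((\<lambda>u. ereal (T_opt (D u) (r u) (\<rho> u) (\<zeta> u) (t * B u) (t * RS u) (t * F u + s))) ` {1..U})"
    unfolding P2_value_def
    by (intro Inf_lower CollectI exI[of _ "\<lambda>u. t * B u"] exI[of _ "\<lambda>u. t * RS u"]
        exI[of _ "\<lambda>u. t * F u + s"]) (use scaled in auto)
  also have "\<dots> \<le> ereal (z / t)"
  proof -
    have "T_opt (D u) (r u) (\<rho> u) (\<zeta> u) (t * B u) (t * RS u) (t * F u + s) \<le> z / t"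
      if u: "u \<in> {1..U}" for u
      using scaled[OF u] bound u divide_right_mono[of "D u / (B u * r u)" z t] assms(7) by simp
    then show ?thesis using assms(1) by (subst Max_le_iff) auto
  qed
  finally show ?thesis .
qed

lemma P2_value_le_P3_value:
  assumes "U \<ge> 1" "\<forall>u\<in>{1..U}. r u > 0 \<and> \<rho> u > 0 \<and> 0 < \<zeta> u \<and> \<zeta> u < 1"
    and "Vtot \<ge> 0" "Btot \<ge> 0" "Rtot \<ge> 0" "Ftot > 0"
  shows "P2_value U D r \<rho> \<zeta> Vtot Btot Rtot Ftot \<le> P3_value U D r \<rho> \<zeta> Btot Rtot Ftot"
  unfolding P3_value_def
proof (rule Inf_greatest, clarify)
  fix B RS F
  assume nonneg: "\<forall>u\<in>{1..U}. B u \<ge> 0 \<and> RS u \<ge> 0 \<and> F u \<ge> 0"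
    and totals: "(\<Sum>u\<in>{1..U}. B u) \<le> Btot" "(\<Sum>u\<in>{1..U}. RS u) \<le> Rtot"
      "(\<Sum>u\<in>{1..U}. F u) \<le> Ftot"
    and coupled: "\<forall>u\<in>{1..U}. RS u \<le> B u * r u \<and> B u * r u \<le> RS u / \<zeta> u"
    and offload: "\<forall>u\<in>{1..U}. F u / \<rho> u = (B u * r u - RS u) / (1 - \<zeta> u)"
  show "P2_value U D r \<rho> \<zeta> Vtot Btot Rtot Ftot \<le> Max ((\<lambda>u. ratio_inf (D u) (B u * r u)) ` {1..U})"
  proof (rule ereal_le_real)
    fix z
    assume "Max ((\<lambda>u. ratio_inf (D u) (B u * r u)) ` {1..U}) \<le> ereal z"
    then have ratio: "ratio_inf (D u) (B u * r u) \<le> ereal z" if "u \<in> {1..U}" for u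
      using that by (auto simp: Max_le_iff)
    have B_pos: "\<forall>u\<in>{1..U}. B u > 0 \<and> F u \<ge> 0"
    proof
      fix u assume u: "u \<in> {1..U}"
      then have "B u \<noteq> 0" using ratio[OF u] by (auto simp: ratio_inf_def)
      then show "B u > 0 \<and> F u \<ge> 0" using nonneg u by force
    qed
    have bound: "\<forall>u\<in>{1..U}. D u / (B u * r u) \<le> z"
    proof
      fix u assume u: "u \<in> {1..U}"
      have "B u > 0" "r u > 0" using B_pos assms(2) u by blast+
      then have "B u * r u \<noteq> 0" by simp
      then show "D u / (B u * r u) \<le> z" using ratio[OF u] by (simp add: ratio_inf_def)
    qed
    show "P2_value U D r \<rho> \<zeta> Vtot Btot Rtot Ftot \<le> ereal z"
    proof (rule ereal_le_mult_one_interval)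
      fix t :: ereal
      assume "0 < t" "t < 1"
      then obtain \<tau> where \<tau>: "t = ereal \<tau>" "0 < \<tau>" "\<tau> < 1" by (cases t) auto
      have "P2_value U D r \<rho> \<zeta> Vtot Btot Rtot Ftot \<le> ereal (z / \<tau>)"
        using assms \<tau> B_pos totals coupled offload bound
        by (intro P2_value_le_scaled_P3_value) auto
      then have "ereal \<tau> * P2_value U D r \<rho> \<zeta> Vtot Btot Rtot Ftot \<le> ereal \<tau> * ereal (z / \<tau>)"
        using \<tau> by (intro ereal_mult_left_mono) auto
      then show "t * P2_value U D r \<rho> \<zeta> Vtot Btot Rtot Ftot \<le> ereal z"
        using \<tau> by simp
    qed simp
  qed
qed

theorem theorem3:
  fixes U :: nat and D r \<rho> \<zeta> :: "nat \<Rightarrow> real" and Vtot Btot Rtot Ftot :: real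
  assumes "U \<ge> 1"
    and "\<forall>u\<in>{1..U}. D u > 0 \<and> r u > 0 \<and> \<rho> u > 0 \<and> 0 < \<zeta> u \<and> \<zeta> u < 1"
    and "Vtot \<ge> 0" and "Btot > 0" and "Rtot > 0" and "Ftot > 0"
  shows "P2_value U D r \<rho> \<zeta> Vtot Btot Rtot Ftot = P3_value U D r \<rho> \<zeta> Btot Rtot Ftot"
proof (rule antisym)
  show "P2_value U D r \<rho> \<zeta> Vtot Btot Rtot Ftot \<le> P3_value U D r \<rho> \<zeta> Btot Rtot Ftot"
    using assms by (intro P2_value_le_P3_value) auto
  show "P3_value U D r \<rho> \<zeta> Btot Rtot Ftot \<le> P2_value U D r \<rho> \<zeta> Vtot Btot Rtot Ftot"
    using assms(2) by (intro P3_value_le_P2_value) auto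
qed

end
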